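(* For $x\in\mathbb{C}\setminus\{1,2,3,\dots\}$ define $y_0(x)=\sum_{k=1}^{\infty}\prod_{j=1}^{k}\frac{1}{x-j}$. Then $y_0$ is a meromorphic solution of $y(x+1)=\frac{1}{x}y(x)+\frac{1}{x}$, with simple poles at the positive integers, $\operatorname{Res}(y_0;x=n)=e^{-1}/\Gamma(n)$ for $n\in\mathbb{N}$, $n\ge1$, and it has the Mittag-Leffler decomposition $$y_0(x)=e^{-1}\sum_{k=1}^{\infty}\frac{1}{(x-k)\,\Gamma(k)}.$$ Moreover, for $\arg x\neq 0$, $y_0(x)$ is asymptotic as $|x|\to\infty$ to the formal power series solution $\tilde y$ of the equation.
   Context: $\tilde y$ denotes the (unique) formal power series solution in powers of $1/x$ of the difference equation $y(x+1)=\frac{1}{x}y(x)+\frac{1}{x}$. *)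

theory Defs
  imports "HOL-Complex_Analysis.Complex_Analysis" "HOL-Computational_Algebra.Formal_Power_Series"
begin

definition pos_ints :: "complex set" where
  "pos_ints = of_nat ` {1..}"

definition y0 :: "complex \<Rightarrow> complex" where
  "y0 x = (\<Sum>k. \<Prod>j\<in>{1..Suc k}. 1 / (x - of_nat j))"

text \<open>The formal power series solution in powers of t = 1/x of
  y(x+1) = y(x)/x + 1/x.  Since 1/(x+1) = t/(1+t), the equation reads
  Y(t/(1+t)) = t * (Y(t) + 1); the coefficient of t^n is the coefficient of x^(-n).\<close>
definition ytilde :: "complex fps" where
  "ytilde = (THE Y. fps_compose Y (fps_X / (1 + fps_X)) = fps_X * (Y + 1))"

end

theory Submission
  imports Defs
begin

unbundle no vec_syntax

(* Write P_k(x) = (x-1)^-1 ... (x-k)^-1 (recip_falling k x), so y0 = P_1 + P_2 + ...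
   Partial fractions give P_(k+1)(x) = sum_(m<=k) (-1)^(k-m) / (m! (k-m)!) / (x-m-1), and the
   Cauchy product with e^-1 = sum (-1)^n/n! turns y0 into e^-1 sum_m 1/(m! (x-m-1)): a series
   of simple poles with absolutely summable residues.  Holomorphy off the positive integers,
   the poles, their residues and the Mittag-Leffler expansion all follow, and
   P_(k+1)(x+1) = P_k(x)/x gives the functional equation termwise.
   For the asymptotics put t = 1/x.  Then P_k(x) = prod_(j<=k) t/(1-jt) is analytic at t = 0,
   the shift x -> x+1 becomes t -> t/(1+t), and the formal solution is the coefficientwise sum
   of the expansions of the P_k, of which only P_1, ..., P_N contribute below t^N.  Hence
   P_1 + ... + P_N agrees with the truncated formal solution up to O(|x|^-N), while in the
   sector |arg x| >= delta every |x - j| is at least sin(min delta 1) |x|, which makes the tail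
   P_(N+1) + P_(N+2) + ... of order |x|^(-N-1). *)

section \<open>The formal solution\<close>

definition succ_subst :: "'a::field fps" where
  "succ_subst = fps_X / (1 + fps_X)"

lemma succ_subst_conv_inverse: "succ_subst = fps_X * inverse (1 + fps_X)"
  unfolding succ_subst_def by (rule fps_divide_unit) simp

lemma succ_subst_nth_0 [simp]: "succ_subst $ 0 = 0"
  and succ_subst_nth_1 [simp]: "succ_subst $ Suc 0 = 1"
  by (simp_all add: succ_subst_conv_inverse)

lemma linear_compose_succ_subst:
  "(1 - fps_const c * fps_X) oo succ_subst = 1 - fps_const c * succ_subst"
  by (simp add: fps_compose_sub_distrib fps_const_mult_apply_left[symmetric])

lemma geometric_compose_succ_subst:
  fixes c :: "'a::field"
  shows "(fps_X * inverse (1 - fps_const (1 + c) * fps_X)) oo succ_subst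
           = fps_X * inverse (1 - fps_const c * fps_X)"
proof -
  have "(1 + fps_X) * inverse (1 + fps_X) = (1 :: 'a fps)"
    by (rule inverse_mult_eq_1') simp
  then have subst: "(1 + fps_X) * succ_subst = (fps_X :: 'a fps)"
    unfolding succ_subst_conv_inverse by (metis mult.left_commute mult.right_neutral)
  have "(1 + fps_X) * (1 - fps_const (1 + c) * succ_subst)
      = 1 + fps_X - fps_const (1 + c) * ((1 + fps_X) * succ_subst :: 'a fps)"
    by (simp add: algebra_simps)
  also have "\<dots> = 1 - fps_const c * fps_X"
    by (simp only: subst fps_const_add fps_const_1_eq_1) (simp add: algebra_simps)
  finally have "(1 + fps_X) * (1 - fps_const (1 + c) * succ_subst)
      = (1 - fps_const c * fps_X :: 'a fps)" .
  then have "fps_X * inverse (1 - fps_const c * fps_X)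
      = fps_X * inverse (1 + fps_X) * inverse (1 - fps_const (1 + c) * succ_subst :: 'a fps)"
    by (metis fps_inverse_mult mult.assoc)
  then show ?thesis
    by (simp add: fps_compose_mult_distrib fps_inverse_compose linear_compose_succ_subst
        succ_subst_conv_inverse[symmetric])
qed

text \<open>The expansion of \<open>\<Prod>j=1..k. 1 / (x - j)\<close> in powers of \<open>t = 1/x\<close>, using
  \<open>1 / (x - j) = t / (1 - j t)\<close>.\<close>
definition recip_falling_fps :: "nat \<Rightarrow> 'a::field fps" where
  "recip_falling_fps k = (\<Prod>j\<in>{1..k}. fps_X * inverse (1 - fps_const (of_nat j) * fps_X))"

lemma recip_falling_fps_0 [simp]: "recip_falling_fps 0 = 1"
  by (simp add: recip_falling_fps_def)

lemma recip_falling_fps_conv_power: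
  "recip_falling_fps k = fps_X ^ k * (\<Prod>j\<in>{1..k}. inverse (1 - fps_const (of_nat j) * fps_X))"
  by (simp add: recip_falling_fps_def prod.distrib)

lemma recip_falling_fps_nth_less: "n < k \<Longrightarrow> recip_falling_fps k $ n = 0"
  by (simp add: recip_falling_fps_conv_power fps_X_power_mult_nth)

lemma recip_falling_fps_compose_succ_subst:
  "recip_falling_fps (Suc k) oo succ_subst = fps_X * (recip_falling_fps k :: 'a::field fps)"
proof -
  have "recip_falling_fps (Suc k) oo succ_subst
      = (\<Prod>j\<in>{1..Suc k}. fps_X * inverse (1 - fps_const (of_nat j) * fps_X) oo succ_subst :: 'a fps)"
    unfolding recip_falling_fps_def by (rule fps_compose_prod_distrib) simp
  also have "\<dots> = (\<Prod>j\<in>{0..k}. fps_X * inverse (1 - fps_const (of_nat j) * fps_X))"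
    by (simp only: One_nat_def prod.shift_bounds_cl_Suc_ivl of_nat_Suc geometric_compose_succ_subst)
  also have "\<dots> = fps_X * recip_falling_fps k"
    by (simp add: prod.atLeast_Suc_atMost recip_falling_fps_def)
  finally show ?thesis .
qed

text \<open>The coefficientwise sum of all \<open>recip_falling_fps k\<close>; only \<open>k \<le> n\<close> contribute to the
  coefficient of \<open>t^n\<close>.\<close>
definition formal_solution :: "'a::field fps" where
  "formal_solution = Abs_fps (\<lambda>n. \<Sum>k\<in>{1..n}. recip_falling_fps k $ n)"

lemma formal_solution_nth:
  "n \<le> N \<Longrightarrow> formal_solution $ n = (\<Sum>k\<in>{1..N}. recip_falling_fps k $ n)"
  unfolding formal_solution_def by (auto intro!: sum.mono_neutral_left recip_falling_fps_nth_less)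

lemma formal_solution_compose_succ_subst:
  "formal_solution oo succ_subst = fps_X * (formal_solution + 1 :: 'a::field fps)"
proof (rule fps_ext)
  fix n
  have "(formal_solution oo succ_subst) $ n
      = ((\<Sum>k\<in>{1..n}. recip_falling_fps k) oo succ_subst) $ n"
    unfolding fps_compose_nth by (intro sum.cong refl) (simp add: formal_solution_nth fps_sum_nth)
  also have "\<dots> = (\<Sum>k\<in>{1..n}. (fps_X * recip_falling_fps (k - 1)) $ n :: 'a)"
    unfolding fps_compose_sum_distrib fps_sum_nth
    by (intro sum.cong refl) (metis Suc_diff_1 atLeastAtMost_iff less_eq_Suc_le
        recip_falling_fps_compose_succ_subst One_nat_def)
  also have "\<dots> = (fps_X * (formal_solution + 1)) $ n"
  proof (cases n)
    case (Suc m)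
    have "(\<Sum>k\<in>{1..Suc m}. (fps_X * recip_falling_fps (k - 1)) $ Suc m :: 'a)
        = (\<Sum>k\<le>m. recip_falling_fps k $ m)"
      by (rule sum.reindex_bij_witness[of _ Suc "\<lambda>k. k - 1"]) auto
    also have "\<dots> = 1 $ m + formal_solution $ m"
      by (simp add: atMost_atLeast0 sum.atLeast_Suc_atMost formal_solution_def)
    finally show ?thesis using Suc by simp
  qed simp
  finally show "(formal_solution oo succ_subst) $ n
      = (fps_X * (formal_solution + 1 :: 'a fps)) $ n" .
qed

lemma succ_subst_equation_unique:
  fixes A B :: "'a::field fps"
  assumes "A oo succ_subst = fps_X * (A + 1)" and "B oo succ_subst = fps_X * (B + 1)"
  shows "A = B"
proof -
  define D where "D = A - B"
  have D: "D oo succ_subst = fps_X * D"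
    using assms by (simp add: D_def fps_compose_sub_distrib algebra_simps)
  have "D $ n = 0" for n
  proof (induction n rule: less_induct)
    case (less n)
    have "(D oo succ_subst) $ n = (\<Sum>i\<in>{n}. D $ i * (succ_subst ^ i) $ n)"
      unfolding fps_compose_nth using less by (intro sum.mono_neutral_right) auto
    also have "\<dots> = D $ n"
      by (simp add: startsby_zero_power_nth_same)
    finally show ?case
      using less D by (cases n) auto
  qed
  then show ?thesis
    unfolding D_def by (simp add: fps_eq_iff)
qed

lemma ytilde_eq_formal_solution: "ytilde = formal_solution"
  unfolding ytilde_def succ_subst_def[symmetric]
  using formal_solution_compose_succ_subst succ_subst_equation_unique by blast

section \<open>Series of simple poles\<close>

lemma simple_pole_decomposition:
  fixes f h :: "complex \<Rightarrow> complex"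
  assumes S: "open S" "z \<in> S" and h: "h holomorphic_on S" and "c \<noteq> 0"
    and f: "\<And>w. w \<in> S \<Longrightarrow> w \<noteq> z \<Longrightarrow> f w = c / (w - z) + h w"
  shows "is_pole f z \<and> zorder f z = -1 \<and> residue f z = c \<and> isolated_singularity_at f z"
proof -
  define F where "F w = c + (w - z) * h w" for w
  have F_holo: "F holomorphic_on S"
    unfolding F_def by (intro holomorphic_intros h)
  have Fz: "F z = c"
    by (simp add: F_def)
  have f_eq: "f w = F w / (w - z)" if "w \<in> S" "w \<noteq> z" for w
    using f[OF that] that(2) by (simp add: F_def field_simps)
  have ev: "eventually (\<lambda>w. F w / (w - z) ^ 1 = f w) (at z)"
    using eventually_at_in_open[OF S] by eventually_elim (simp add: f_eq)
  have "is_pole (\<lambda>w. F w / (w - z) ^ 1) z"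
    by (rule is_pole_basic[OF F_holo S(1,2)]) (simp_all add: Fz \<open>c \<noteq> 0\<close>)
  then have "is_pole f z"
    by (rule is_pole_transform[OF _ ev refl])
  moreover have "zorder f z = -1"
    by (rule zorder_eqI[OF S F_holo]) (simp_all add: Fz \<open>c \<noteq> 0\<close> f_eq power_int_minus divide_inverse)
  moreover have "residue f z = c"
    using residue_cong[OF ev refl] residue_simple[OF S F_holo] by (simp add: Fz)
  moreover have "isolated_singularity_at f z"
  proof (rule isolated_singularity_at_holomorphic[OF _ S])
    have "(\<lambda>w. F w / (w - z)) holomorphic_on S - {z}"
      using F_holo by (intro holomorphic_intros) (auto intro: holomorphic_on_subset)
    then show "f holomorphic_on S - {z}"
      by (rule holomorphic_transform) (simp add: f_eq)
  qed
  ultimately show ?thesis by blast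
qed

lemma norm_pole_term_le:
  fixes c a :: "nat \<Rightarrow> 'a::real_normed_field"
  assumes "ball x r \<subseteq> - closure (a ` {m. c m \<noteq> 0})" "0 < r"
  shows "norm (c m / (x - a m)) \<le> norm (c m) / r"
proof (cases "c m = 0")
  case False
  then have "a m \<in> closure (a ` {m. c m \<noteq> 0})"
    by (intro subsetD[OF closure_subset] imageI) simp
  then have "a m \<notin> ball x r"
    using assms(1) by blast
  then have "r \<le> norm (x - a m)"
    by (simp add: dist_norm)
  then show ?thesis
    unfolding norm_divide using \<open>0 < r\<close> by (intro divide_left_mono mult_pos_pos) auto
qed simp

lemma summable_pole_series:
  fixes c a :: "nat \<Rightarrow> 'a::{real_normed_field,banach}"
  assumes "summable (\<lambda>m. norm (c m))" "x \<notin> closure (a ` {m. c m \<noteq> 0})"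
  shows "summable (\<lambda>m. norm (c m / (x - a m)))"
proof -
  obtain r where "0 < r" "ball x r \<subseteq> - closure (a ` {m. c m \<noteq> 0})"
    using assms(2) open_contains_ball_eq[OF open_Compl[OF closed_closure]] by (meson ComplI)
  then have "norm (norm (c m / (x - a m))) \<le> norm (c m) / r" for m
    using norm_pole_term_le by simp
  then show ?thesis
    by (intro summable_comparison_test'[OF summable_divide[OF assms(1), of r]])
qed

lemma holomorphic_on_pole_series:
  fixes c a :: "nat \<Rightarrow> complex"
  assumes "summable (\<lambda>m. norm (c m))"
  shows "(\<lambda>x. \<Sum>m. c m / (x - a m)) holomorphic_on - closure (a ` {m. c m \<noteq> 0})"
    (is "_ holomorphic_on ?S")
proof (rule holomorphic_uniform_sequence[where f = "\<lambda>n x. \<Sum>m<n. c m / (x - a m)"])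
  have "(\<lambda>x. c m / (x - a m)) holomorphic_on ?S" for m
  proof (cases "c m = 0")
    case False
    then have pole: "a m \<in> closure (a ` {m. c m \<noteq> 0})"
      by (intro subsetD[OF closure_subset] imageI) simp
    have "x - a m \<noteq> 0" if "x \<in> ?S" for x
      using that pole by (metis ComplD right_minus_eq)
    then show ?thesis
      by (intro holomorphic_on_divide holomorphic_on_const holomorphic_on_diff holomorphic_on_ident)
  qed simp
  then show "(\<lambda>x. \<Sum>m<n. c m / (x - a m)) holomorphic_on ?S" for n
    by (intro holomorphic_on_sum)
  fix x assume "x \<in> ?S"
  then obtain r where r: "0 < r" "ball x r \<subseteq> ?S"
    using open_contains_ball_eq[OF open_Compl[OF closed_closure]] by (meson ComplI)
  have cball: "cball x (r / 2) \<subseteq> ?S"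
    using r by (force simp: subset_iff)
  have ball_y: "ball y (r / 2) \<subseteq> ?S" if "y \<in> cball x (r / 2)" for y
  proof -
    have "ball y (r / 2) \<subseteq> ball x r"
    proof
      fix z assume "z \<in> ball y (r / 2)"
      then show "z \<in> ball x r"
        using that dist_triangle[of x z y] by simp
    qed
    with r(2) show ?thesis by blast
  qed
  have "norm (c m / (y - a m)) \<le> norm (c m) / (r / 2)" if "y \<in> cball x (r / 2)" for m y
    using norm_pole_term_le[OF ball_y[OF that]] r(1) by simp
  then have "uniform_limit (cball x (r / 2)) (\<lambda>n y. \<Sum>m<n. c m / (y - a m))
      (\<lambda>y. \<Sum>m. c m / (y - a m)) sequentially"
    by (rule Weierstrass_m_test[OF _ summable_divide[OF assms]])
  with r(1) cball show "\<exists>d>0. cball x d \<subseteq> ?S \<and> uniform_limit (cball x d)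
      (\<lambda>n y. \<Sum>m<n. c m / (y - a m)) (\<lambda>y. \<Sum>m. c m / (y - a m)) sequentially"
    by (intro exI[of _ "r / 2"] conjI) simp_all
qed (intro open_Compl closed_closure)

lemma suminf_eq_term_plus_rest:
  fixes f :: "nat \<Rightarrow> 'a::real_normed_vector"
  assumes "summable f"
  shows "suminf f = f p + (\<Sum>m. if m = p then 0 else f m)"
proof -
  have "(\<lambda>m. f m - (if m = p then f m else 0)) sums (suminf f - f p)"
    using summable_sums[OF assms] sums_single[of p f] by (rule sums_diff)
  moreover have "(\<lambda>m. f m - (if m = p then f m else 0)) = (\<lambda>m. if m = p then 0 else f m)"
    by auto
  ultimately show ?thesis
    by (simp add: sums_iff)
qed

section \<open>Partial fractions and the Mittag-Leffler expansion\<close>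

definition recip_falling :: "nat \<Rightarrow> 'a::field \<Rightarrow> 'a" where
  "recip_falling k x = (\<Prod>j\<in>{1..k}. 1 / (x - of_nat j))"

lemma recip_falling_Suc: "recip_falling (Suc k) x = recip_falling k x / (x - of_nat (Suc k))"
  by (simp add: recip_falling_def prod.cl_ivl_Suc divide_inverse)

lemma sum_alternating_fact_products:
  assumes "0 < n"
  shows "(\<Sum>m\<le>n. (-1) ^ (n - m) / (fact m * fact (n - m)) :: 'a::field_char_0) = 0"
proof -
  have "(\<Sum>m\<le>n. (-1) ^ (n - m) / (fact m * fact (n - m)) :: 'a)
      = (\<Sum>m\<le>n. of_nat (n choose m) * 1 ^ m * (-1) ^ (n - m)) / fact n"
    unfolding sum_divide_distrib
    by (intro sum.cong refl) (simp add: binomial_fact field_simps)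
  also have "\<dots> = (1 + (-1)) ^ n / fact n"
    by (simp only: binomial_ring)
  finally show ?thesis
    using assms by simp
qed

lemma recip_falling_partial_fractions:
  fixes x :: "'a::field_char_0"
  assumes "\<And>j. j \<le> k \<Longrightarrow> x \<noteq> of_nat (Suc j)"
  shows "recip_falling (Suc k) x
           = (\<Sum>m\<le>k. (-1) ^ (k - m) / (fact m * fact (k - m)) / (x - of_nat (Suc m)))"
  using assms
proof (induction k)
  case 0
  then show ?case
    by (simp add: recip_falling_def)
next
  case (Suc k)
  define c where "c k' m = (-1) ^ (k' - m) / (fact m * fact (k' - m) :: 'a)" for k' m
  define b where "b = x - of_nat (Suc (Suc k))"
  have b: "b \<noteq> 0"
    using Suc.prems[of "Suc k"] by (simp add: b_def)
  have step: "c k m / (x - of_nat (Suc m)) / b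
      = c (Suc k) m / (x - of_nat (Suc m)) - c (Suc k) m / b" if "m \<le> k" for m
  proof -
    define d :: 'a where "d = of_nat (Suc (k - m))"
    have "x - of_nat (Suc m) \<noteq> 0"
      using Suc.prems[of m] that by simp
    moreover have "d \<noteq> 0"
      unfolding d_def by (rule of_nat_neq_0)
    moreover have "x - of_nat (Suc m) = b + d"
      using that by (simp add: b_def d_def of_nat_diff)
    moreover have "c (Suc k) m = - c k m / d"
      using that by (simp add: c_def d_def Suc_diff_le field_simps)
    ultimately show ?thesis
      using b by (simp add: field_simps)
  qed
  have "recip_falling (Suc (Suc k)) x = (\<Sum>m\<le>k. c k m / (x - of_nat (Suc m)) / b)"
    using Suc by (simp add: recip_falling_Suc c_def b_def sum_divide_distrib)
  also have "\<dots> = (\<Sum>m\<le>k. c (Suc k) m / (x - of_nat (Suc m)) - c (Suc k) m / b)"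
    by (intro sum.cong refl step) simp
  also have "\<dots> = (\<Sum>m\<le>k. c (Suc k) m / (x - of_nat (Suc m))) - (\<Sum>m\<le>k. c (Suc k) m) / b"
    by (simp only: sum_subtractf sum_divide_distrib)
  also have "(\<Sum>m\<le>k. c (Suc k) m) = - c (Suc k) (Suc k)"
    using sum_alternating_fact_products[of "Suc k", where 'a = 'a]
    by (simp add: c_def eq_neg_iff_add_eq_0)
  finally show ?case
    by (simp add: c_def b_def)
qed

lemma pos_ints_iff: "x \<in> pos_ints \<longleftrightarrow> (\<exists>m. x = of_nat (Suc m))"
proof
  assume "x \<in> pos_ints"
  then obtain j where "1 \<le> j" "x = of_nat j"
    by (auto simp: pos_ints_def)
  then show "\<exists>m. x = of_nat (Suc m)"
    by (intro exI[of _ "j - 1"]) simp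
next
  assume "\<exists>m. x = of_nat (Suc m)"
  then obtain m where "x = of_nat (Suc m)"
    by blast
  then show "x \<in> pos_ints"
    unfolding pos_ints_def by (intro image_eqI[of _ _ "Suc m"]) simp_all
qed

lemma closure_image_of_nat_Suc:
  "closure ((\<lambda>m. of_nat (Suc m) :: 'a::real_normed_algebra_1) ` S) = (\<lambda>m. of_nat (Suc m)) ` S"
proof -
  have "(\<lambda>m. of_nat (Suc m) :: 'a) ` S = of_nat ` Suc ` S"
    by (simp add: image_image)
  then show ?thesis
    using closed_of_nat_image by (metis closure_closed)
qed

lemma range_of_nat_Suc: "range (\<lambda>m. of_nat (Suc m)) = pos_ints"
  by (auto simp: pos_ints_iff)

lemma of_nat_notin_ball:
  "m \<noteq> n \<Longrightarrow> of_nat m \<notin> ball (of_nat n :: 'a::real_normed_algebra_1) 1"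
  by (simp add: dist_of_nat)

lemma closed_pos_ints: "closed pos_ints"
  unfolding pos_ints_def by (rule closed_of_nat_image)

lemma closure_mittag_leffler_poles:
  "closure ((\<lambda>m. of_nat (Suc m)) ` {m. 1 / fact m \<noteq> (0::complex)}) = pos_ints"
proof -
  have "{m. 1 / fact m \<noteq> (0::complex)} = UNIV"
    by simp
  then show ?thesis
    by (simp add: range_of_nat_Suc closed_pos_ints del: of_nat_Suc)
qed

lemma summable_norm_inverse_fact: "summable (\<lambda>m. norm (1 / fact m :: complex))"
  using summable_exp[of "1::real"] by (simp add: norm_divide inverse_eq_divide)

lemma sums_exp_minus_one: "(\<lambda>n. (-1) ^ n / fact n) sums (exp (-1) :: complex)"
  using exp_converges[of "-1 :: complex"]
  by (simp add: scaleR_conv_of_real divide_inverse mult.commute)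

lemma summable_mittag_leffler:
  "x \<notin> pos_ints \<Longrightarrow> summable (\<lambda>m. norm (1 / fact m / (x - of_nat (Suc m))))"
  by (intro summable_pole_series summable_norm_inverse_fact)
     (simp only: closure_mittag_leffler_poles not_False_eq_True)

lemma recip_falling_sums_mittag_leffler:
  assumes "x \<notin> pos_ints"
  shows "(\<lambda>k. recip_falling (Suc k) x) sums (exp (-1) * (\<Sum>m. 1 / fact m / (x - of_nat (Suc m))))"
proof -
  note ml = summable_mittag_leffler[OF assms]
  have exp: "summable (\<lambda>n. norm ((-1) ^ n / fact n :: complex))"
    using summable_norm_inverse_fact by (simp add: norm_divide norm_power)
  have "recip_falling (Suc k) x
      = (\<Sum>i\<le>k. 1 / fact i / (x - of_nat (Suc i)) * ((-1) ^ (k - i) / fact (k - i)))" for k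
  proof -
    have "recip_falling (Suc k) x
        = (\<Sum>i\<le>k. (-1) ^ (k - i) / (fact i * fact (k - i)) / (x - of_nat (Suc i)))"
      using assms by (intro recip_falling_partial_fractions) (auto simp: pos_ints_iff)
    also have "\<dots> = (\<Sum>i\<le>k. 1 / fact i / (x - of_nat (Suc i)) * ((-1) ^ (k - i) / fact (k - i)))"
      by (intro sum.cong refl) (simp add: divide_inverse mult_ac)
    finally show ?thesis .
  qed
  moreover have "(\<lambda>k. \<Sum>i\<le>k. 1 / fact i / (x - of_nat (Suc i)) * ((-1) ^ (k - i) / fact (k - i)))
      sums ((\<Sum>m. 1 / fact m / (x - of_nat (Suc m))) * exp (-1))"
    using Cauchy_product_sums[OF ml exp]
    by (simp only: sums_unique[OF sums_exp_minus_one, symmetric])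
  ultimately show ?thesis
    by (simp only: mult.commute)
qed

lemma y0_eq_suminf_recip_falling: "y0 x = (\<Sum>k. recip_falling (Suc k) x)"
  by (simp add: y0_def recip_falling_def)

lemma y0_mittag_leffler:
  "x \<notin> pos_ints \<Longrightarrow> y0 x = exp (-1) * (\<Sum>m. 1 / fact m / (x - of_nat (Suc m)))"
  using recip_falling_sums_mittag_leffler by (simp add: y0_eq_suminf_recip_falling sums_iff)

lemma holomorphic_y0: "y0 holomorphic_on - pos_ints"
proof (rule holomorphic_transform)
  have "(\<lambda>x. \<Sum>m. 1 / fact m / (x - of_nat (Suc m))) holomorphic_on - pos_ints"
    using holomorphic_on_pole_series[OF summable_norm_inverse_fact, of "\<lambda>m. of_nat (Suc m)"]
    by (simp only: closure_mittag_leffler_poles)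
  then show "(\<lambda>x. exp (-1) * (\<Sum>m. 1 / fact m / (x - of_nat (Suc m)))) holomorphic_on - pos_ints"
    by (rule holomorphic_on_mult[OF holomorphic_on_const])
qed (simp add: y0_mittag_leffler)

lemma recip_falling_shift: "recip_falling (Suc k) (x + 1) = recip_falling k x / x"
proof -
  have "recip_falling (Suc k) (x + 1) = (\<Prod>j\<in>{0..k}. 1 / (x + 1 - of_nat (Suc j)))"
    by (simp only: recip_falling_def One_nat_def prod.shift_bounds_cl_Suc_ivl)
  also have "\<dots> = 1 / x * (\<Prod>j\<in>{1..k}. 1 / (x - of_nat j))"
    by (simp add: prod.atLeast_Suc_atMost)
  finally show ?thesis
    by (simp add: recip_falling_def)
qed

lemma y0_functional_equation:
  assumes "x \<notin> pos_ints"
  shows "y0 (x + 1) = y0 x / x + 1 / x"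
proof -
  have "(\<lambda>k. recip_falling (Suc k) x) sums y0 x"
    using recip_falling_sums_mittag_leffler[OF assms] y0_mittag_leffler[OF assms] by simp
  then have "(\<lambda>k. recip_falling k x) sums (y0 x + 1)"
    by (subst (asm) sums_Suc_iff) (simp add: recip_falling_def)
  then have "(\<lambda>k. recip_falling (Suc k) (x + 1)) sums ((y0 x + 1) / x)"
    unfolding recip_falling_shift by (rule sums_divide)
  then show ?thesis
    by (simp add: y0_eq_suminf_recip_falling sums_iff add_divide_distrib)
qed

lemma y0_mittag_leffler_sums:
  assumes "x \<notin> pos_ints"
  shows "(\<lambda>k. exp (-1) / ((x - of_nat (Suc k)) * Gamma (of_nat (Suc k)))) sums y0 x"
proof -
  have "(\<lambda>k. exp (-1) * (1 / fact k / (x - of_nat (Suc k))))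
      sums (exp (-1) * (\<Sum>m. 1 / fact m / (x - of_nat (Suc m))))"
    using summable_norm_cancel[OF summable_mittag_leffler[OF assms]]
    by (intro sums_mult summable_sums)
  then show ?thesis
    by (simp add: y0_mittag_leffler[OF assms] Gamma_fact mult.commute)
qed

lemma y0_simple_pole:
  "is_pole y0 (of_nat (Suc p)) \<and> zorder y0 (of_nat (Suc p)) = -1
     \<and> residue y0 (of_nat (Suc p)) = exp (-1) / fact p
     \<and> isolated_singularity_at y0 (of_nat (Suc p))"
proof -
  define n :: complex where "n = of_nat (Suc p)"
  define c where "c m = (if m = p then 0 else 1 / fact m :: complex)" for m
  define h where "h w = exp (-1) * (\<Sum>m. c m / (w - of_nat (Suc m)))" for w
  have far: "of_nat (Suc m) \<notin> ball n 1" if "m \<noteq> p" for m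
    unfolding n_def using that by (intro of_nat_notin_ball) simp
  have c_summable: "summable (\<lambda>m. norm (c m))"
    by (rule summable_comparison_test'[OF summable_norm_inverse_fact]) (simp add: c_def)
  have "ball n 1 \<subseteq> - closure ((\<lambda>m. of_nat (Suc m)) ` {m. c m \<noteq> 0})"
    using far by (auto simp only: closure_image_of_nat_Suc c_def) (auto split: if_splits)
  with holomorphic_on_pole_series[OF c_summable]
  have "(\<lambda>w. \<Sum>m. c m / (w - of_nat (Suc m))) holomorphic_on ball n 1"
    by (rule holomorphic_on_subset)
  then have h_holo: "h holomorphic_on ball n 1"
    unfolding h_def by (rule holomorphic_on_mult[OF holomorphic_on_const])
  have y0_near: "y0 w = exp (-1) / fact p / (w - n) + h w" if "w \<in> ball n 1" "w \<noteq> n" for w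
  proof -
    have "w \<notin> pos_ints"
    proof
      assume "w \<in> pos_ints"
      then obtain m where m: "w = of_nat (Suc m)"
        using pos_ints_iff by blast
      then have "m = p"
        using far[of m] that(1) by (cases "m = p") auto
      with m that(2) show False
        by (simp add: n_def)
    qed
    have summable: "summable (\<lambda>m. 1 / fact m / (w - of_nat (Suc m)))"
      using summable_mittag_leffler[OF \<open>w \<notin> pos_ints\<close>] by (rule summable_norm_cancel)
    have remove_p: "(\<lambda>m. if m = p then 0 else 1 / fact m / (w - of_nat (Suc m)))
        = (\<lambda>m. c m / (w - of_nat (Suc m)))"
      by (simp add: c_def fun_eq_iff)
    have "(\<Sum>m. 1 / fact m / (w - of_nat (Suc m)))
        = 1 / fact p / (w - n) + (\<Sum>m. c m / (w - of_nat (Suc m)))"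
      using suminf_eq_term_plus_rest[OF summable, of p] unfolding remove_p n_def .
    then show ?thesis
      using y0_mittag_leffler[OF \<open>w \<notin> pos_ints\<close>] unfolding h_def by (simp add: distrib_left)
  qed
  show ?thesis
    unfolding n_def[symmetric]
    by (rule simple_pole_decomposition[OF open_ball _ h_holo _ y0_near]) auto
qed

lemma y0_meromorphic: "y0 meromorphic_on UNIV"
  unfolding meromorphic_on_altdef
proof
  fix z :: complex
  show "isolated_singularity_at y0 z \<and> not_essential y0 z"
  proof (cases "z \<in> pos_ints")
    case True
    then obtain p where "z = of_nat (Suc p)"
      using pos_ints_iff by blast
    then have "is_pole y0 z" "isolated_singularity_at y0 z"
      using y0_simple_pole[of p] by simp_all
    then show ?thesis
      using is_pole_imp_not_essential by blast
  next
    case False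
    have open_S: "open (- pos_ints)"
      using closed_pos_ints by blast
    have "y0 holomorphic_on - pos_ints - {z}"
      using holomorphic_y0 by (rule holomorphic_on_subset) blast
    then have "isolated_singularity_at y0 z"
      by (rule isolated_singularity_at_holomorphic[OF _ open_S]) (use False in simp)
    moreover have "not_essential y0 z"
      by (rule not_essential_holomorphic[OF holomorphic_y0 _ open_S]) (use False in simp)
    ultimately show ?thesis ..
  qed
qed

section \<open>Asymptotic expansion\<close>

lemma eval_fps_split:
  fixes F :: "'a::{banach, real_normed_field} fps"
  assumes "norm t < fps_conv_radius F"
  shows "eval_fps F t = (\<Sum>n<N. fps_nth F n * t ^ n) + t ^ N * eval_fps (fps_shift N F) t"
proof -
  have "eval_fps F t = (\<Sum>n. fps_nth F (n + N) * t ^ (n + N)) + (\<Sum>n<N. fps_nth F n * t ^ n)"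
    unfolding eval_fps_def using summable_fps[OF assms] by (rule suminf_split_initial_segment)
  also have "(\<Sum>n. fps_nth F (n + N) * t ^ (n + N)) = t ^ N * eval_fps (fps_shift N F) t"
    using summable_fps[of t "fps_shift N F"] assms
    by (simp add: eval_fps_def power_add suminf_mult[symmetric] mult_ac)
  finally show ?thesis
    by (simp add: add.commute)
qed

lemma has_fps_expansion_remainder_bound:
  fixes f :: "'a::{banach, real_normed_field, heine_borel} \<Rightarrow> 'a"
  assumes "f has_fps_expansion F"
  obtains C r where "0 < r"
    "\<And>t. norm t \<le> r \<Longrightarrow> norm (f t - (\<Sum>n<N. fps_nth F n * t ^ n)) \<le> C * norm t ^ N"
proof -
  obtain d where d: "0 < d" "\<And>t. norm t < d \<Longrightarrow> eval_fps F t = f t"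
    using assms unfolding has_fps_expansion_def eventually_nhds_metric by (auto simp: dist_norm)
  obtain \<rho> where \<rho>: "0 < \<rho>" "ereal \<rho> < fps_conv_radius F"
    using assms ereal_dense2[of 0 "fps_conv_radius F"] unfolding has_fps_expansion_def
    by (auto simp: zero_ereal_def)
  define r where "r = min (d / 2) \<rho>"
  have r: "0 < r" "r < d"
    using d(1) \<rho>(1) by (auto simp: r_def)
  have "ereal r < fps_conv_radius F"
    by (rule le_less_trans[OF _ \<rho>(2)]) (simp add: r_def)
  have in_radius: "ereal (norm t) < fps_conv_radius F" if "norm t \<le> r" for t :: 'a
    using that \<open>ereal r < fps_conv_radius F\<close> by (metis ereal_less_eq(3) order.strict_trans1)
  have "continuous_on (cball 0 r) (eval_fps (fps_shift N F))"
    using in_radius by (intro continuous_on_subset[OF continuous_on_eval_fps]) auto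
  then have "bounded (eval_fps (fps_shift N F) ` cball 0 r)"
    by (intro compact_imp_bounded compact_continuous_image compact_cball)
  then obtain B where B: "\<And>t. t \<in> cball 0 r \<Longrightarrow> norm (eval_fps (fps_shift N F) t) \<le> B"
    unfolding bounded_iff by blast
  show ?thesis
  proof (rule that[OF r(1)])
    fix t :: 'a assume t: "norm t \<le> r"
    have "f t - (\<Sum>n<N. fps_nth F n * t ^ n) = t ^ N * eval_fps (fps_shift N F) t"
      using eval_fps_split[OF in_radius[OF t], where N = N] d(2)[of t] t r(2) by simp
    also have "norm \<dots> \<le> B * norm t ^ N"
      using B[of t] t unfolding norm_mult norm_power mult.commute[of B]
      by (intro mult_left_mono) auto
    finally show "norm (f t - (\<Sum>n<N. fps_nth F n * t ^ n)) \<le> B * norm t ^ N" .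
  qed
qed

lemma recip_falling_inverse:
  fixes t :: "'a::field"
  assumes "t \<noteq> 0"
  shows "recip_falling k (inverse t) = (\<Prod>j\<in>{1..k}. t * inverse (1 - of_nat j * t))"
  unfolding recip_falling_def
proof (intro prod.cong refl)
  fix j :: nat
  have "inverse t - of_nat j = (1 - of_nat j * t) * inverse t"
    using assms by (simp add: algebra_simps)
  then show "1 / (inverse t - of_nat j) = t * inverse (1 - of_nat j * t)"
    using assms by (simp add: divide_inverse mult.commute)
qed

lemma has_fps_expansion_recip_falling:
  "(\<lambda>t. \<Prod>j\<in>{1..k}. t * inverse (1 - of_nat j * t))
     has_fps_expansion (recip_falling_fps k :: 'a::{banach, real_normed_field} fps)"
  unfolding recip_falling_fps_def
  by (intro has_fps_expansion_prod has_fps_expansion_mult has_fps_expansion_inverse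
        has_fps_expansion_diff has_fps_expansion_cmult_left has_fps_expansion_fps_X
        has_fps_expansion_1) simp

lemma norm_recip_falling_le:
  fixes x :: "'a::real_normed_field"
  assumes "0 < \<rho>" "\<And>j. \<rho> \<le> norm (x - of_nat j)"
  shows "norm (recip_falling k x) \<le> inverse \<rho> ^ k"
proof -
  have "norm (recip_falling k x) = (\<Prod>j\<in>{1..k}. inverse (norm (x - of_nat j)))"
    by (simp add: recip_falling_def norm_divide divide_inverse norm_inverse flip: prod_norm)
  also have "\<dots> \<le> (\<Prod>j\<in>{1..k}. inverse \<rho>)"
    using assms by (intro prod_mono) (auto intro: le_imp_inverse_le)
  finally show ?thesis
    by simp
qed

lemma recip_falling_tail_bound:
  fixes x :: "'a::{real_normed_field, banach}"
  assumes "2 \<le> \<rho>" "\<And>j. \<rho> \<le> norm (x - of_nat j)"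
  shows "summable (\<lambda>k. recip_falling (k + M) x)"
    and "norm (\<Sum>k. recip_falling (k + M) x) \<le> 2 * inverse \<rho> ^ M"
proof -
  have bound: "norm (recip_falling (k + M) x) \<le> inverse \<rho> ^ M * (1 / 2) ^ k" for k
  proof -
    have "norm (recip_falling (k + M) x) \<le> inverse \<rho> ^ M * inverse \<rho> ^ k"
      using norm_recip_falling_le[of \<rho> x "k + M"] assms by (simp add: power_add mult.commute)
    also have "\<dots> \<le> inverse \<rho> ^ M * (1 / 2) ^ k"
      using assms(1) by (intro mult_left_mono power_mono) (auto simp: field_simps)
    finally show ?thesis .
  qed
  have geometric: "summable (\<lambda>k. inverse \<rho> ^ M * (1 / 2 :: real) ^ k)"
    by (intro summable_mult summable_geometric) simp
  have norm_summable: "summable (\<lambda>k. norm (recip_falling (k + M) x))"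
    using bound by (intro summable_comparison_test'[OF geometric]) simp
  then show "summable (\<lambda>k. recip_falling (k + M) x)"
    by (rule summable_norm_cancel)
  have "norm (\<Sum>k. recip_falling (k + M) x) \<le> (\<Sum>k. inverse \<rho> ^ M * (1 / 2 :: real) ^ k)"
    using summable_norm[OF norm_summable] suminf_le[OF bound norm_summable geometric] by linarith
  also have "\<dots> = 2 * inverse \<rho> ^ M"
    by (simp add: suminf_mult suminf_geometric summable_geometric)
  finally show "norm (\<Sum>k. recip_falling (k + M) x) \<le> 2 * inverse \<rho> ^ M" .
qed

lemma sector_norm_diff_nonneg_real_ge:
  fixes x :: complex
  assumes "0 < \<delta>" "\<delta> \<le> \<bar>Arg x\<bar>" "0 \<le> r"
  shows "sin (min \<delta> 1) * norm x \<le> norm (x - of_real r)"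
proof (cases "Re x \<le> 0")
  case True
  have "0 \<le> r * (r - 2 * Re x)"
    using True assms(3) by simp
  then have "(norm x)\<^sup>2 \<le> (norm (x - of_real r))\<^sup>2"
    unfolding cmod_power2 by (simp add: power2_eq_square algebra_simps)
  then have "norm x \<le> norm (x - of_real r)"
    by (rule power2_le_imp_le) simp
  moreover have "0 \<le> sin (min \<delta> 1)"
    using assms(1) pi_gt3 by (intro sin_ge_zero) auto
  ultimately show ?thesis
    by (metis mult_left_le_one_le norm_ge_zero order_trans sin_le_one)
next
  case False
  then have Arg_small: "\<bar>Arg x\<bar> < pi / 2"
    using Arg_Re_pos by simp
  then have "sin (min \<delta> 1) \<le> sin \<bar>Arg x\<bar>"
    using assms by (intro sin_monotone_2pi_le) auto
  then have "sin (min \<delta> 1) * norm x \<le> sin \<bar>Arg x\<bar> * norm x"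
    by (rule mult_right_mono) simp
  also have "sin \<bar>Arg x\<bar> * norm x = \<bar>Im (x - of_real r)\<bar>"
  proof -
    have Im: "Im x = norm x * sin (Arg x)"
      using Im_rcis[of "norm x" "Arg x"] by (simp add: rcis_cmod_Arg)
    show ?thesis
      using Arg_less_0[of x] by (cases "0 \<le> Arg x") (auto simp: Im abs_if mult.commute)
  qed
  also have "\<dots> \<le> norm (x - of_real r)"
    by (rule abs_Im_le_cmod)
  finally show ?thesis .
qed

lemma truncated_formal_solution_approximates:
  obtains C r where "0 < r"
    "\<And>x. inverse r \<le> norm x \<Longrightarrow>
      norm ((\<Sum>k\<in>{1..N}. recip_falling k x) - (\<Sum>n<N. fps_nth ytilde n / x ^ n)) \<le> C / norm x ^ N"
proof -
  define f where "f t = (\<Sum>k\<in>{1..N}. \<Prod>j\<in>{1..k}. t * inverse (1 - of_nat j * t))" for t :: complex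
  define F where "F = (\<Sum>k\<in>{1..N}. recip_falling_fps k :: complex fps)"
  have F_nth: "fps_nth F n = fps_nth ytilde n" if "n < N" for n
    using that formal_solution_nth[of n N, where 'a = complex]
    by (simp add: F_def fps_sum_nth ytilde_eq_formal_solution)
  have "f has_fps_expansion F"
    unfolding f_def F_def by (intro has_fps_expansion_sum has_fps_expansion_recip_falling)
  then obtain C r where r: "0 < r"
    and C: "\<And>t. norm t \<le> r \<Longrightarrow> norm (f t - (\<Sum>n<N. fps_nth F n * t ^ n)) \<le> C * norm t ^ N"
    by (rule has_fps_expansion_remainder_bound[where N = N]) blast
  show ?thesis
  proof (rule that[OF r])
    fix x :: complex assume x: "inverse r \<le> norm x"
    have "inverse (norm x) \<le> inverse (inverse r)"
      using x r by (intro le_imp_inverse_le) auto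
    then have "norm (inverse x) \<le> r"
      by (simp add: norm_inverse)
    moreover have "x \<noteq> 0"
      using x r by auto
    moreover have "(\<Sum>k\<in>{1..N}. recip_falling k x) = f (inverse x)"
      unfolding f_def using recip_falling_inverse[of "inverse x"] \<open>x \<noteq> 0\<close> by simp
    moreover have "(\<Sum>n<N. fps_nth ytilde n / x ^ n) = (\<Sum>n<N. fps_nth F n * inverse x ^ n)"
      using F_nth by (simp add: power_inverse divide_inverse)
    ultimately show "norm ((\<Sum>k\<in>{1..N}. recip_falling k x) - (\<Sum>n<N. fps_nth ytilde n / x ^ n))
        \<le> C / norm x ^ N"
      using C[of "inverse x"] by (simp add: norm_inverse power_inverse divide_inverse)
  qed
qed

lemma y0_asymptotic_expansion:
  assumes "0 < \<delta>"
  shows "\<exists>C R. \<forall>x. R \<le> norm x \<and> \<delta> \<le> \<bar>Arg x\<bar> \<longrightarrow>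
           norm (y0 x - (\<Sum>n<N. fps_nth ytilde n / x ^ n)) \<le> C / norm x ^ N"
proof -
  define s where "s = sin (min \<delta> 1)"
  have s: "0 < s" "s \<le> 1"
    using assms pi_gt3 by (auto simp: s_def intro!: sin_gt_zero)
  obtain C r where r: "0 < r" and head: "\<And>x. inverse r \<le> norm x \<Longrightarrow>
      norm ((\<Sum>k\<in>{1..N}. recip_falling k x) - (\<Sum>n<N. fps_nth ytilde n / x ^ n)) \<le> C / norm x ^ N"
    by (rule truncated_formal_solution_approximates[where N = N]) blast
  have "norm (y0 x - (\<Sum>n<N. fps_nth ytilde n / x ^ n)) \<le> (C + 2 * inverse s ^ Suc N) / norm x ^ N"
    if x: "max (inverse r) (2 / s) \<le> norm x" "\<delta> \<le> \<bar>Arg x\<bar>" for x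
  proof -
    have x2: "2 \<le> s * norm x"
      using x(1) s(1) by (simp add: field_simps)
    then have x1: "1 \<le> norm x"
      using s by (smt (verit) mult_left_le_one_le norm_ge_zero)
    have far: "s * norm x \<le> norm (x - of_nat j)" for j
      using sector_norm_diff_nonneg_real_ge[OF assms x(2), of "real j"] by (simp add: s_def)
    have "summable (\<lambda>k. recip_falling (Suc k) x)"
      using recip_falling_tail_bound(1)[OF x2 far, of 1] by simp
    from suminf_split_initial_segment[OF this, of N]
    have "y0 x = (\<Sum>k\<in>{1..N}. recip_falling k x) + (\<Sum>k. recip_falling (k + Suc N) x)"
      by (simp add: y0_eq_suminf_recip_falling One_nat_def sum.atLeast1_atMost_eq)
    then have "norm (y0 x - (\<Sum>n<N. fps_nth ytilde n / x ^ n))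
        \<le> norm ((\<Sum>k\<in>{1..N}. recip_falling k x) - (\<Sum>n<N. fps_nth ytilde n / x ^ n))
            + norm (\<Sum>k. recip_falling (k + Suc N) x)"
      by (simp only: diff_add_eq[symmetric] norm_triangle_ineq)
    also have "\<dots> \<le> C / norm x ^ N + 2 * inverse (s * norm x) ^ Suc N"
      using head[OF order_trans[OF max.cobounded1 x(1)]] recip_falling_tail_bound(2)[OF x2 far]
      by (rule add_mono)
    also have "2 * inverse (s * norm x) ^ Suc N
        = 2 * inverse s ^ Suc N / norm x ^ N * inverse (norm x)"
      by (simp add: power_mult_distrib divide_inverse power_inverse mult_ac)
    also have "\<dots> \<le> 2 * inverse s ^ Suc N / norm x ^ N"
      using s(1) x1 by (intro mult_right_le_one_le) (auto simp: inverse_le_1_iff)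
    finally show ?thesis
      by (simp add: add_divide_distrib)
  qed
  then show ?thesis
    by blast
qed

theorem mainTheorem1:
  shows
    "(\<forall>x. x \<notin> pos_ints \<longrightarrow> summable (\<lambda>k. \<Prod>j\<in>{1..Suc k}. 1 / (x - of_nat j)))
     \<and> y0 holomorphic_on (- pos_ints)
     \<and> y0 meromorphic_on UNIV
     \<and> (\<forall>x. x \<notin> pos_ints \<and> x \<noteq> 0 \<longrightarrow> y0 (x + 1) = y0 x / x + 1 / x)
     \<and> (\<forall>n::nat. n \<ge> 1 \<longrightarrow>
          is_pole y0 (of_nat n) \<and> zorder y0 (of_nat n) = -1
          \<and> residue y0 (of_nat n) = exp (-1) / Gamma (of_nat n))
     \<and> (\<forall>x. x \<notin> pos_ints \<longrightarrow>
          (\<lambda>k. exp (-1) / ((x - of_nat (Suc k)) * Gamma (of_nat (Suc k)))) sums y0 x)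
     \<and> (\<forall>\<delta>>0. \<forall>N::nat. \<exists>C R. \<forall>x. norm x \<ge> R \<and> \<bar>Arg x\<bar> \<ge> \<delta> \<longrightarrow>
          norm (y0 x - (\<Sum>n<N. fps_nth ytilde n / x ^ n)) \<le> C / norm x ^ N)"
proof -
  have summable: "summable (\<lambda>k. \<Prod>j\<in>{1..Suc k}. 1 / (x - of_nat j))" if "x \<notin> pos_ints" for x
    using sums_summable[OF recip_falling_sums_mittag_leffler[OF that]] unfolding recip_falling_def .
  have pole: "is_pole y0 (of_nat n) \<and> zorder y0 (of_nat n) = -1
      \<and> residue y0 (of_nat n) = exp (-1) / Gamma (of_nat n)" if n: "n \<ge> 1" for n :: nat
  proof -
    obtain m where "n = Suc m"
      using n by (cases n) auto
    then show ?thesis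
      using y0_simple_pole[of m] by (simp add: Gamma_fact)
  qed
  show ?thesis
    using summable holomorphic_y0 y0_meromorphic y0_functional_equation pole
      y0_mittag_leffler_sums y0_asymptotic_expansion
    by blast
qed

end
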